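(* Let $F$ be an infinite field of characteristic $p>2$ and $k$ a positive integer. Let $l_1,\dots,l_k\in\mathbb{N}_0$ and let $x^i_1,\dots,x^i_{l_i}$ ($i=1,\dots,k$) be distinct variables, $x^i_t$ of degree $i$. Consider the graded monomial $T=(x^1_1)^{r^1_1}\cdots(x^1_{l_1})^{r^1_{l_1}}\cdots(x^k_1)^{r^k_1}\cdots(x^k_{l_k})^{r^k_{l_k}}$ with non-negative integer exponents satisfying $\sum_{i=1}^k i\,(r^i_1+\cdots+r^i_{l_i})\le k$. Let $r=\max\{r^i_t\}$ and suppose $p>r$. Then $T$ is not a $\mathbb{Z}$-graded identity of $E^{k^\ast}$.
   Context: $L$ is a vector space over $F$ with basis $e_1,e_2,\dots$, $E$ its unital Grassmann algebra (basis $1$ and $e_{i_1}\cdots e_{i_k}$, $i_1<\cdots<i_k$, with $e_ie_j=-e_je_i$). $E^{k^\ast}$ is $E$ with the $\mathbb{Z}$-grading induced by $\|e_i\|=1$ for $i\le k$, $\|e_i\|=0$ for $i>k$ (basis monomials get the sum of degrees of their factors; $1$ has degree $0$). A graded polynomial is a graded identity of $A$ if it vanishes whenever each variable is replaced by an element of the homogeneous component of $A$ of that variable's degree. *)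

theory Defs
  imports Main
begin

text \<open>An element is a coefficient function on finite sets S of positive
naturals (S stands for the basis monomial e_(i1)...e_(im), i1 < ... < im), with finite support.\<close>

definition grassmann_elem :: "(nat set \<Rightarrow> 'a::field) \<Rightarrow> bool" where
  "grassmann_elem f \<longleftrightarrow> finite {S. f S \<noteq> 0} \<and>
     (\<forall>S. f S \<noteq> 0 \<longrightarrow> finite S \<and> 0 \<notin> S)"

text \<open>Sign with e_S e_T = sign S T e_(S \<union> T) for disjoint S, T.\<close>
definition gsign :: "nat set \<Rightarrow> nat set \<Rightarrow> 'a::field" where
  "gsign S T = (- 1) ^ card {(i, j). i \<in> S \<and> j \<in> T \<and> j < i}"

definition gmult :: "(nat set \<Rightarrow> 'a::field) \<Rightarrow> (nat set \<Rightarrow> 'a) \<Rightarrow> (nat set \<Rightarrow> 'a)" where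
  "gmult f g U = (if finite U then (\<Sum>S\<in>Pow U. gsign S (U - S) * f S * g (U - S)) else 0)"

definition gone :: "nat set \<Rightarrow> 'a::field" where
  "gone S = (if S = {} then 1 else 0)"

primrec gpow :: "(nat set \<Rightarrow> 'a::field) \<Rightarrow> nat \<Rightarrow> (nat set \<Rightarrow> 'a)" where
  "gpow f 0 = gone"
| "gpow f (Suc n) = gmult f (gpow f n)"

text \<open>Homogeneous component of degree d of E^{k*}: the grading has ||e_i|| = 1 for i \<le> k and
0 for i > k, so the basis monomial e_S has degree card (S \<inter> {1..k}).\<close>
definition gcomp :: "nat \<Rightarrow> int \<Rightarrow> (nat set \<Rightarrow> 'a::field) set" where
  "gcomp k d = {f. grassmann_elem f \<and> (\<forall>S. f S \<noteq> 0 \<longrightarrow> int (card (S \<inter> {1..k})) = d)}"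

definition mon_vars :: "nat \<Rightarrow> (nat \<Rightarrow> nat) \<Rightarrow> (nat \<times> nat) list" where
  "mon_vars k l = concat (map (\<lambda>i. map (\<lambda>t. (i, t)) [1..<Suc (l i)]) [1..<Suc k])"

definition eval_mon :: "nat \<Rightarrow> (nat \<Rightarrow> nat) \<Rightarrow> (nat \<Rightarrow> nat \<Rightarrow> nat)
    \<Rightarrow> (nat \<Rightarrow> nat \<Rightarrow> (nat set \<Rightarrow> 'a::field)) \<Rightarrow> (nat set \<Rightarrow> 'a)" where
  "eval_mon k l r \<phi> = foldr (\<lambda>(i, t) acc. gmult (gpow (\<phi> i t) (r i t)) acc) (mon_vars k l) gone"

definition graded_identity_mon :: "'a::field itself \<Rightarrow> nat \<Rightarrow> (nat \<Rightarrow> nat) \<Rightarrow> (nat \<Rightarrow> nat \<Rightarrow> nat) \<Rightarrow> bool" where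
  "graded_identity_mon _ k l r \<longleftrightarrow>
     (\<forall>\<phi> :: nat \<Rightarrow> nat \<Rightarrow> (nat set \<Rightarrow> 'a::field).
        (\<forall>i\<in>{1..k}. \<forall>t\<in>{1..l i}. \<phi> i t \<in> gcomp k (int i)) \<longrightarrow> eval_mon k l r \<phi> = (\<lambda>_. 0))"

end

(* Substitute for each variable x^i_t a sum of r^i_t basis monomials e_B over pairwise disjoint
   blocks B of generators: i consecutive generators among e_1, ..., e_k (possible since
   sum i r^i_t <= k) and, if i is odd, one generator of degree 0, so that every block has even
   size. With a suitable arrangement of the generators any two of these block monomials multiply
   without a sign, and each squares to zero. *)

theory Submission
  imports Defs "HOL-Library.Product_Lexorder"
begin

definition gbasis :: "nat set \<Rightarrow> nat set \<Rightarrow> 'a::field" where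
  "gbasis S = (\<lambda>U. if U = S then 1 else 0)"

definition inversions :: "nat set \<Rightarrow> nat set \<Rightarrow> (nat \<times> nat) set" where
  "inversions S T = {(i, j). i \<in> S \<and> j \<in> T \<and> j < i}"

lemma gone_eq_gbasis_empty: "gone = gbasis {}"
  by (rule ext) (simp add: gone_def gbasis_def)

lemma gsign_eq_inversions: "gsign S T = (- 1) ^ card (inversions S T)"
  by (simp add: gsign_def inversions_def)

lemma finite_inversions: "finite S \<Longrightarrow> finite T \<Longrightarrow> finite (inversions S T)"
  by (rule finite_subset[of _ "S \<times> T"]) (auto simp: inversions_def)

lemma inversions_Un_left:
  assumes "\<And>x y. x \<in> S1 \<Longrightarrow> y \<in> T \<Longrightarrow> x < y" "\<And>x y. x \<in> S2 \<Longrightarrow> y \<in> T \<Longrightarrow> y < x"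
  shows "inversions (S1 \<union> S2) T = S2 \<times> T"
  using assms by (fastforce simp: inversions_def dest: less_asym)

lemma inversions_Un_right:
  assumes "\<And>x y. x \<in> S \<Longrightarrow> y \<in> T1 \<Longrightarrow> y < x" "\<And>x y. x \<in> S \<Longrightarrow> y \<in> T2 \<Longrightarrow> x < y"
  shows "inversions S (T1 \<union> T2) = S \<times> T1"
  using assms by (fastforce simp: inversions_def dest: less_asym)

lemma card_inversions_UN_left:
  assumes "finite J" "\<And>a. a \<in> J \<Longrightarrow> finite (A a)" "finite T"
    and "\<And>a b. a \<in> J \<Longrightarrow> b \<in> J \<Longrightarrow> a \<noteq> b \<Longrightarrow> A a \<inter> A b = {}"
  shows "card (inversions (\<Union>a\<in>J. A a) T) = (\<Sum>a\<in>J. card (inversions (A a) T))"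
proof -
  have "inversions (\<Union>a\<in>J. A a) T = (\<Union>a\<in>J. inversions (A a) T)"
    by (auto simp: inversions_def)
  also have "card \<dots> = (\<Sum>a\<in>J. card (inversions (A a) T))"
    using assms by (intro card_UN_disjoint) (auto simp: finite_inversions, auto simp: inversions_def)
  finally show ?thesis .
qed

lemma card_inversions_UN_right:
  assumes "finite J" "\<And>b. b \<in> J \<Longrightarrow> finite (B b)" "finite S"
    and "\<And>a b. a \<in> J \<Longrightarrow> b \<in> J \<Longrightarrow> a \<noteq> b \<Longrightarrow> B a \<inter> B b = {}"
  shows "card (inversions S (\<Union>b\<in>J. B b)) = (\<Sum>b\<in>J. card (inversions S (B b)))"
proof -
  have "inversions S (\<Union>b\<in>J. B b) = (\<Union>b\<in>J. inversions S (B b))"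
    by (auto simp: inversions_def)
  also have "card \<dots> = (\<Sum>b\<in>J. card (inversions S (B b)))"
    using assms by (intro card_UN_disjoint) (auto simp: finite_inversions, auto simp: inversions_def)
  finally show ?thesis .
qed

lemma gmult_gbasis:
  assumes "finite S" "finite T"
  shows "gmult (gbasis S) (gbasis T) =
    (if S \<inter> T = {} then (\<lambda>U. gsign S T * gbasis (S \<union> T) U) else (\<lambda>_. 0))"
proof
  fix U
  have "gmult (gbasis S) (gbasis T) U = (if finite U then (\<Sum>S'\<in>Pow U.
      if S' = S then gsign S (U - S) * (if U - S = T then 1 else 0) else 0) else 0)"
    unfolding gmult_def gbasis_def by (intro if_cong refl sum.cong) auto
  also have "\<dots> = (if finite U \<and> S \<subseteq> U \<and> U - S = T then gsign S T else 0)"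
    by (simp add: sum.delta)
  also have "(finite U \<and> S \<subseteq> U \<and> U - S = T) \<longleftrightarrow> S \<inter> T = {} \<and> U = S \<union> T"
    using assms by blast
  finally have U_eq: "gmult (gbasis S) (gbasis T) U = (if S \<inter> T = {} \<and> U = S \<union> T then gsign S T else 0)"
    by simp
  show "gmult (gbasis S) (gbasis T) U =
      (if S \<inter> T = {} then (\<lambda>U. gsign S T * gbasis (S \<union> T) U) else (\<lambda>_. 0)) U"
    unfolding U_eq by (simp add: gbasis_def[of "S \<union> T"])
qed

lemma gmult_scale:
  "gmult (\<lambda>U. c * f U) (\<lambda>U. e * g U) = (\<lambda>U. c * e * gmult f g U)"
  by (rule ext) (simp add: gmult_def sum_distrib_left mult_ac)

lemma gmult_sum:
  assumes "finite A" "finite B"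
  shows "gmult (\<lambda>U. \<Sum>x\<in>A. f x U) (\<lambda>U. \<Sum>y\<in>B. g y U) = (\<lambda>U. \<Sum>x\<in>A. \<Sum>y\<in>B. gmult (f x) (g y) U)"
proof
  fix U
  show "gmult (\<lambda>U. \<Sum>x\<in>A. f x U) (\<lambda>U. \<Sum>y\<in>B. g y U) U = (\<Sum>x\<in>A. \<Sum>y\<in>B. gmult (f x) (g y) U)"
  proof (cases "finite U")
    case True
    have "gmult (\<lambda>U. \<Sum>x\<in>A. f x U) (\<lambda>U. \<Sum>y\<in>B. g y U) U
       = (\<Sum>S\<in>Pow U. \<Sum>y\<in>B. \<Sum>x\<in>A. gsign S (U - S) * f x S * g y (U - S))"
      using True by (simp add: gmult_def sum_distrib_left sum_distrib_right mult.assoc)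
    also have "\<dots> = (\<Sum>x\<in>A. \<Sum>S\<in>Pow U. \<Sum>y\<in>B. gsign S (U - S) * f x S * g y (U - S))"
      by (subst sum.swap) (intro sum.cong refl sum.swap)
    also have "\<dots> = (\<Sum>x\<in>A. \<Sum>y\<in>B. \<Sum>S\<in>Pow U. gsign S (U - S) * f x S * g y (U - S))"
      by (intro sum.cong refl sum.swap)
    finally show ?thesis
      using True by (simp add: gmult_def)
  qed (simp add: gmult_def)
qed

lemma sum_insert_subsets_card:
  fixes h :: "'b set \<Rightarrow> 'a::comm_semiring_1"
  assumes B: "finite B"
  shows "(\<Sum>b\<in>B. \<Sum>J | J \<subseteq> B \<and> card J = n. if b \<notin> J then h (insert b J) else 0)
       = (\<Sum>J | J \<subseteq> B \<and> card J = Suc n. of_nat (Suc n) * h J)"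
proof -
  have fin: "finite {J. J \<subseteq> B \<and> card J = m}" for m using B by simp
  have "(\<Sum>b\<in>B. \<Sum>J | J \<subseteq> B \<and> card J = n. if b \<notin> J then h (insert b J) else 0)
      = (\<Sum>b\<in>B. \<Sum>J | J \<subseteq> B \<and> card J = n \<and> b \<notin> J. h (insert b J))"
    by (rule sum.cong[OF refl]) (simp add: sum.If_cases fin Int_def conj_ac)
  also have "\<dots> = (\<Sum>(b, J)\<in>(SIGMA b:B. {J. J \<subseteq> B \<and> card J = n \<and> b \<notin> J}). h (insert b J))"
    using B by (subst sum.Sigma) auto
  also have "\<dots> = (\<Sum>(J, b)\<in>(SIGMA J:{J. J \<subseteq> B \<and> card J = Suc n}. J). h J)"
    by (rule sum.reindex_bij_witness[where i = "\<lambda>(J, b). (b, J - {b})" and j = "\<lambda>(b, J). (insert b J, b)"])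
       (auto simp: insert_absorb card_insert_if intro: finite_subset[OF _ B] dest: finite_subset[OF _ B])
  also have "\<dots> = (\<Sum>J | J \<subseteq> B \<and> card J = Suc n. of_nat (Suc n) * h J)"
    using B by (subst sum.Sigma[symmetric]) (auto simp: fin intro: finite_subset)
  finally show ?thesis .
qed

lemma of_nat_fact_nonzero:
  assumes "m < CHAR('a::field)"
  shows "(of_nat (fact m) :: 'a) \<noteq> 0"
  using assms
proof (induction m)
  case (Suc m)
  have "\<not> CHAR('a) dvd Suc m" using Suc.prems by (auto dest: dvd_imp_le)
  then have "(of_nat (Suc m) :: 'a) \<noteq> 0" by (metis of_nat_eq_0_iff_char_dvd)
  with Suc show ?case by (simp only: fact_Suc of_nat_mult) simp
qed simp

locale commuting_blocks =
  fixes I :: "'i set" and blk :: "'i \<Rightarrow> nat set"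
  assumes finite_index: "finite I"
    and finite_blk: "b \<in> I \<Longrightarrow> finite (blk b)"
    and blk_nonempty: "b \<in> I \<Longrightarrow> blk b \<noteq> {}"
    and blk_disjoint: "a \<in> I \<Longrightarrow> b \<in> I \<Longrightarrow> a \<noteq> b \<Longrightarrow> blk a \<inter> blk b = {}"
    and even_inversions: "a \<in> I \<Longrightarrow> b \<in> I \<Longrightarrow> a \<noteq> b \<Longrightarrow> even (card (inversions (blk a) (blk b)))"
begin

definition block_monomial :: "'i set \<Rightarrow> nat set \<Rightarrow> 'a::field" where
  "block_monomial J = gbasis (\<Union>b\<in>J. blk b)"

lemma finite_subset_index: "J \<subseteq> I \<Longrightarrow> finite J"
  by (rule finite_subset[OF _ finite_index])

lemma finite_blocks: "J \<subseteq> I \<Longrightarrow> finite (\<Union>b\<in>J. blk b)"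
  using finite_subset_index finite_blk by blast

lemma gsign_blocks:
  assumes "J1 \<subseteq> I" "J2 \<subseteq> I" "J1 \<inter> J2 = {}"
  shows "gsign (\<Union>a\<in>J1. blk a) (\<Union>b\<in>J2. blk b) = (1::'a::field)"
proof -
  have fin: "finite J1" "finite J2"
    using assms finite_subset_index by simp_all
  have "card (inversions (\<Union>a\<in>J1. blk a) (\<Union>b\<in>J2. blk b))
      = (\<Sum>b\<in>J2. \<Sum>a\<in>J1. card (inversions (blk a) (blk b)))"
    using assms fin finite_blk blk_disjoint finite_blocks
    by (simp add: card_inversions_UN_left card_inversions_UN_right subset_iff)
  also have "even \<dots>"
    using assms even_inversions by (intro dvd_sum) blast
  finally show ?thesis
    by (simp add: gsign_eq_inversions)
qed

lemma gmult_block_monomial: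
  assumes "J1 \<subseteq> I" "J2 \<subseteq> I"
  shows "gmult (block_monomial J1) (block_monomial J2) =
    (if J1 \<inter> J2 = {} then block_monomial (J1 \<union> J2) else (\<lambda>_. (0::'a::field)))"
proof (cases "J1 \<inter> J2 = {}")
  case True
  then have "(\<Union>a\<in>J1. blk a) \<inter> (\<Union>b\<in>J2. blk b) = {}"
    using assms blk_disjoint by fastforce
  with True show ?thesis
    using assms by (simp add: block_monomial_def gmult_gbasis finite_blocks gsign_blocks)
next
  case False
  then obtain c where "c \<in> J1" "c \<in> J2"
    by blast
  moreover obtain x where "x \<in> blk c"
    using assms \<open>c \<in> J1\<close> blk_nonempty by blast
  ultimately have "(\<Union>a\<in>J1. blk a) \<inter> (\<Union>b\<in>J2. blk b) \<noteq> {}"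
    by blast
  with False show ?thesis
    using assms by (simp add: block_monomial_def gmult_gbasis finite_blocks)
qed

lemma gpow_sum_block_monomials:
  assumes B: "B \<subseteq> I"
  shows "gpow (\<lambda>U. \<Sum>b\<in>B. block_monomial {b} U) n
       = (\<lambda>U. (of_nat (fact n) :: 'a::field) * (\<Sum>J | J \<subseteq> B \<and> card J = n. block_monomial J U))"
proof (induction n)
  case 0
  have "{J. J \<subseteq> B \<and> card J = 0} = {{}}"
    using finite_subset_index[OF B] by (auto dest: finite_subset)
  then show ?case
    by (simp add: gone_eq_gbasis_empty block_monomial_def)
next
  case (Suc n)
  define C where "C = {J. J \<subseteq> B \<and> card J = n}"
  have fin: "finite B" "finite C"
    using finite_subset_index[OF B] by (simp_all add: C_def)
  define c :: 'a where "c = of_nat (fact n)"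
  have "gpow (\<lambda>U. \<Sum>b\<in>B. block_monomial {b} U) (Suc n)
      = gmult (\<lambda>U. \<Sum>b\<in>B. block_monomial {b} U) (\<lambda>U. \<Sum>J\<in>C. c * block_monomial J U)"
    using Suc.IH by (simp add: sum_distrib_left c_def C_def)
  also have "\<dots> = (\<lambda>U. \<Sum>b\<in>B. \<Sum>J\<in>C. gmult (block_monomial {b}) (\<lambda>U. c * block_monomial J U) U)"
    by (rule gmult_sum[OF fin])
  also have "\<dots> = (\<lambda>U. \<Sum>b\<in>B. \<Sum>J\<in>C. c * (if b \<notin> J then block_monomial (insert b J) U else 0))"
  proof (intro ext sum.cong refl)
    fix U b J
    assume "b \<in> B" "J \<in> C"
    then have "{b} \<subseteq> I" "J \<subseteq> I"
      using B by (auto simp: C_def)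
    then show "gmult (block_monomial {b}) (\<lambda>U. c * block_monomial J U) U
        = c * (if b \<notin> J then block_monomial (insert b J) U else 0)"
      using gmult_scale[of 1 "block_monomial {b}" c "block_monomial J"]
      by (simp add: gmult_block_monomial)
  qed
  also have "\<dots> = (\<lambda>U. c * (\<Sum>b\<in>B. \<Sum>J\<in>C. if b \<notin> J then block_monomial (insert b J) U else 0))"
    by (simp add: sum_distrib_left)
  also have "\<dots> = (\<lambda>U. c * (\<Sum>J | J \<subseteq> B \<and> card J = Suc n. of_nat (Suc n) * block_monomial J U))"
    unfolding C_def by (subst sum_insert_subsets_card[OF fin(1)]) (rule refl)
  also have "\<dots> = (\<lambda>U. of_nat (fact (Suc n)) * (\<Sum>J | J \<subseteq> B \<and> card J = Suc n. block_monomial J U))"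
    by (simp add: c_def sum_distrib_left algebra_simps)
  finally show ?case .
qed

lemma gpow_sum_block_monomials_card:
  assumes "B \<subseteq> I"
  shows "gpow (\<lambda>U. \<Sum>b\<in>B. block_monomial {b} U) (card B)
       = (\<lambda>U. (of_nat (fact (card B)) :: 'a::field) * block_monomial B U)"
proof -
  have "{J. J \<subseteq> B \<and> card J = card B} = {B}"
    using finite_subset_index[OF assms] card_subset_eq by blast
  then show ?thesis
    using gpow_sum_block_monomials[OF assms, of "card B"] by simp
qed

lemma foldr_gmult_block_monomials:
  assumes "distinct ws" "\<And>v. v \<in> set ws \<Longrightarrow> B v \<subseteq> I"
    and "\<And>v w. v \<in> set ws \<Longrightarrow> w \<in> set ws \<Longrightarrow> v \<noteq> w \<Longrightarrow> B v \<inter> B w = {}"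
  shows "foldr (\<lambda>v. gmult (\<lambda>U. c v * block_monomial (B v) U)) ws gone
       = (\<lambda>U. (\<Prod>v\<in>set ws. c v) * (block_monomial (\<Union>v\<in>set ws. B v) U :: 'a::field))"
  using assms
proof (induction ws)
  case Nil
  show ?case
    by (simp add: gone_eq_gbasis_empty block_monomial_def)
next
  case (Cons w ws)
  have disj: "B w \<inter> (\<Union>v\<in>set ws. B v) = {}"
    using Cons.prems by fastforce
  have sub: "B w \<subseteq> I" "(\<Union>v\<in>set ws. B v) \<subseteq> I"
    using Cons.prems by auto
  have "foldr (\<lambda>v. gmult (\<lambda>U. c v * block_monomial (B v) U)) (w # ws) gone
      = gmult (\<lambda>U. c w * block_monomial (B w) U)
          (\<lambda>U. (\<Prod>v\<in>set ws. c v) * block_monomial (\<Union>v\<in>set ws. B v) U)"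
    using Cons by simp
  also have "\<dots> = (\<lambda>U. c w * (\<Prod>v\<in>set ws. c v) * block_monomial (B w \<union> (\<Union>v\<in>set ws. B v)) U)"
    by (simp add: gmult_scale gmult_block_monomial[OF sub] disj)
  finally show ?case
    using Cons.prems by (simp add: mult.assoc)
qed

end

locale padded_layout =
  fixes k :: nat and I :: "'i::linorder set" and d :: "'i \<Rightarrow> nat"
  assumes finite_index: "finite I"
    and degree_pos: "b \<in> I \<Longrightarrow> 0 < d b"
    and total_degree: "(\<Sum>b\<in>I. d b) \<le> k"
begin

definition offset :: "'i \<Rightarrow> nat" where
  "offset b = (\<Sum>c | c \<in> I \<and> c < b. d c)"

definition core :: "'i \<Rightarrow> nat set" where
  "core b = {offset b + 1 .. offset b + d b}"

(* The pads decrease with the index; this makes the inversions between two distinct blocks a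
   product set with a whole block as one factor, see inversions_padded_block_less/greater. *)
definition pad :: "'i \<Rightarrow> nat set" where
  "pad b = (if odd (d b) then {k + 1 + card {c \<in> I. b < c}} else {})"

definition padded_block :: "'i \<Rightarrow> nat set" where
  "padded_block b = core b \<union> pad b"

lemma offset_add_le:
  assumes "b \<in> I"
  shows "offset b + d b \<le> k"
proof -
  have "offset b + d b = (\<Sum>c \<in> insert b {c \<in> I. c < b}. d c)"
    using finite_index by (simp add: offset_def)
  also have "\<dots> \<le> (\<Sum>c\<in>I. d c)"
    using assms finite_index by (intro sum_mono2) auto
  finally show ?thesis
    using total_degree by linarith
qed

lemma offset_add_le_offset:
  assumes "a \<in> I" "a < b"
  shows "offset a + d a \<le> offset b"
proof -
  have "offset a + d a = (\<Sum>c \<in> insert a {c \<in> I. c < a}. d c)"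
    using finite_index by (simp add: offset_def)
  also have "\<dots> \<le> offset b"
    unfolding offset_def using assms finite_index by (intro sum_mono2) auto
  finally show ?thesis .
qed

lemma core_subset: "b \<in> I \<Longrightarrow> core b \<subseteq> {1..k}"
  using offset_add_le by (auto simp: core_def)

lemma pad_gt: "x \<in> pad b \<Longrightarrow> k < x"
  by (simp add: pad_def split: if_splits)

lemma core_less: "a \<in> I \<Longrightarrow> a < b \<Longrightarrow> x \<in> core a \<Longrightarrow> y \<in> core b \<Longrightarrow> x < y"
  using offset_add_le_offset[of a b] by (auto simp: core_def)

lemma pad_greater:
  assumes "b \<in> I" "a < b" "x \<in> pad a" "y \<in> pad b"
  shows "y < x"
proof -
  have "{c \<in> I. b < c} \<subset> {c \<in> I. a < c}"
    using assms by auto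
  then have "card {c \<in> I. b < c} < card {c \<in> I. a < c}"
    using finite_index by (intro psubset_card_mono) auto
  then show ?thesis
    using assms by (simp add: pad_def split: if_splits)
qed

lemma finite_padded_block: "finite (padded_block b)"
  by (simp add: padded_block_def core_def pad_def)

lemma even_card_padded_block:
  assumes "b \<in> I"
  shows "even (card (padded_block b))"
proof -
  have "core b \<inter> pad b = {}"
    using core_subset[OF assms] pad_gt by fastforce
  then have "card (padded_block b) = d b + card (pad b)"
    by (simp add: padded_block_def card_Un_disjoint core_def pad_def)
  then show ?thesis
    by (simp add: pad_def)
qed

lemma padded_block_inter_degree_one: "b \<in> I \<Longrightarrow> padded_block b \<inter> {1..k} = core b"
  using core_subset pad_gt by (fastforce simp: padded_block_def)

lemma card_padded_block_inter_degree_one: "b \<in> I \<Longrightarrow> card (padded_block b \<inter> {1..k}) = d b"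
  using padded_block_inter_degree_one[of b] by (simp add: core_def)

lemma zero_notin_padded_block: "0 \<notin> padded_block b"
  by (auto simp: padded_block_def core_def pad_def)

lemma core_below_padded_block:
  assumes "a \<in> I" "b \<in> I" "a < b" "x \<in> core a" "y \<in> padded_block b"
  shows "x < y"
  using assms core_less[of a b x y] core_subset[of a] pad_gt[of y b]
  by (auto simp: padded_block_def)

lemma padded_block_below_pad:
  assumes "a \<in> I" "b \<in> I" "a < b" "x \<in> padded_block b" "y \<in> pad a"
  shows "x < y"
  using assms core_subset[of b] pad_gt[of y a] pad_greater[of b a y x]
  by (auto simp: padded_block_def)

lemma padded_block_disjoint_less:
  assumes "a \<in> I" "b \<in> I" "a < b"
  shows "padded_block a \<inter> padded_block b = {}"
  using assms core_below_padded_block padded_block_below_pad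
  by (fastforce simp: padded_block_def)

lemma inversions_padded_block_less:
  assumes "a \<in> I" "b \<in> I" "a < b"
  shows "inversions (padded_block a) (padded_block b) = pad a \<times> padded_block b"
  unfolding padded_block_def[of a]
  using assms core_below_padded_block padded_block_below_pad by (intro inversions_Un_left)

lemma inversions_padded_block_greater:
  assumes "a \<in> I" "b \<in> I" "b < a"
  shows "inversions (padded_block a) (padded_block b) = padded_block a \<times> core b"
  unfolding padded_block_def[of b]
  using assms core_below_padded_block padded_block_below_pad by (intro inversions_Un_right)

sublocale commuting_blocks I padded_block
proof
  show "finite I" "\<And>b. finite (padded_block b)"
    by (simp_all add: finite_index finite_padded_block)
  show "padded_block b \<noteq> {}" if "b \<in> I" for b
    using degree_pos[OF that] by (auto simp: padded_block_def core_def)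
  show "padded_block a \<inter> padded_block b = {}" if "a \<in> I" "b \<in> I" "a \<noteq> b" for a b
    using that padded_block_disjoint_less[of a b] padded_block_disjoint_less[of b a]
    by (cases a b rule: linorder_cases) (simp_all add: Int_commute)
  show "even (card (inversions (padded_block a) (padded_block b)))"
    if "a \<in> I" "b \<in> I" "a \<noteq> b" for a b
    using that even_card_padded_block[of a] even_card_padded_block[of b]
    by (cases a b rule: linorder_cases)
       (simp_all add: inversions_padded_block_less inversions_padded_block_greater card_cartesian_product)
qed

lemma sum_block_monomials_in_gcomp:
  assumes "B \<subseteq> I" "\<And>b. b \<in> B \<Longrightarrow> d b = n"
  shows "(\<lambda>U. \<Sum>b\<in>B. block_monomial {b} U :: 'a::field) \<in> gcomp k (int n)"
proof -
  have support: "\<exists>b\<in>B. U = padded_block b" if "(\<Sum>b\<in>B. block_monomial {b} U :: 'a) \<noteq> 0" for U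
    using that by (rule contrapos_np) (auto intro!: sum.neutral simp: block_monomial_def gbasis_def)
  have "finite B"
    using assms(1) by (rule finite_subset_index)
  moreover have "{U. (\<Sum>b\<in>B. block_monomial {b} U :: 'a) \<noteq> 0} \<subseteq> padded_block ` B"
    using support by blast
  ultimately have "finite {U. (\<Sum>b\<in>B. block_monomial {b} U :: 'a) \<noteq> 0}"
    using finite_surj by blast
  moreover have "finite U \<and> 0 \<notin> U \<and> int (card (U \<inter> {1..k})) = int n"
    if nonzero: "(\<Sum>b\<in>B. block_monomial {b} U :: 'a) \<noteq> 0" for U
  proof -
    obtain b where "b \<in> B" "U = padded_block b"
      using support[OF nonzero] by blast
    then show ?thesis
      using assms finite_padded_block zero_notin_padded_block card_padded_block_inter_degree_one
      by auto
  qed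
  ultimately show ?thesis
    by (simp add: gcomp_def grassmann_elem_def)
qed

end

lemma mon_vars_set: "set (mon_vars k l) = (SIGMA i:{1..k}. {1..l i})"
  by (force simp: mon_vars_def image_iff less_Suc_eq_le)

lemma distinct_mon_vars: "distinct (mon_vars k l)"
proof (induction k)
  case (Suc k)
  have "mon_vars (Suc k) l = mon_vars k l @ map (Pair (Suc k)) [1..<Suc (l (Suc k))]"
    by (simp add: mon_vars_def)
  with Suc show ?case
    by (auto simp: distinct_map inj_on_def mon_vars_set)
qed (simp add: mon_vars_def)

definition occurrences :: "nat \<Rightarrow> (nat \<Rightarrow> nat) \<Rightarrow> (nat \<Rightarrow> nat \<Rightarrow> nat) \<Rightarrow> ((nat \<times> nat) \<times> nat) set" where
  "occurrences k l r = (SIGMA v:set (mon_vars k l). {..<r (fst v) (snd v)})"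

lemma sum_degrees_occurrences:
  "(\<Sum>b\<in>occurrences k l r. fst (fst b)) = (\<Sum>i=1..k. i * (\<Sum>t=1..l i. r i t))"
proof -
  have "(\<Sum>v\<in>set (mon_vars k l). \<Sum>s<r (fst v) (snd v). fst v)
      = (\<Sum>(v, s)\<in>occurrences k l r. fst v)"
    unfolding occurrences_def by (rule sum.Sigma) simp_all
  then have "(\<Sum>b\<in>occurrences k l r. fst (fst b)) = (\<Sum>v\<in>set (mon_vars k l). r (fst v) (snd v) * fst v)"
    by (simp add: split_def)
  also have "\<dots> = (\<Sum>i=1..k. \<Sum>t=1..l i. r i t * i)"
    by (simp add: mon_vars_set split_def sum.Sigma)
  finally show ?thesis
    by (simp add: sum_distrib_left mult.commute)
qed

locale monomial_layout =
  fixes k :: nat and l :: "nat \<Rightarrow> nat" and r :: "nat \<Rightarrow> nat \<Rightarrow> nat"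
  assumes degree_bound: "(\<Sum>i=1..k. i * (\<Sum>t=1..l i. r i t)) \<le> k"
begin

sublocale padded_layout k "occurrences k l r" "\<lambda>b. fst (fst b)"
proof
  show "finite (occurrences k l r)"
    by (simp add: occurrences_def)
  show "0 < fst (fst b)" if "b \<in> occurrences k l r" for b
    using that by (auto simp: occurrences_def mon_vars_set)
  show "(\<Sum>b\<in>occurrences k l r. fst (fst b)) \<le> k"
    using degree_bound by (simp add: sum_degrees_occurrences)
qed

definition block_substitution :: "nat \<Rightarrow> nat \<Rightarrow> nat set \<Rightarrow> 'a::field" where
  "block_substitution i t = (\<lambda>U. \<Sum>b\<in>{(i, t)} \<times> {..<r i t}. block_monomial {b} U)"

lemma block_substitution_in_gcomp:
  assumes "i \<in> {1..k}" "t \<in> {1..l i}"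
  shows "block_substitution i t \<in> gcomp k (int i)"
  unfolding block_substitution_def
  using assms by (intro sum_block_monomials_in_gcomp) (auto simp: occurrences_def mon_vars_set)

lemma eval_mon_block_substitution:
  "eval_mon k l r (block_substitution :: nat \<Rightarrow> nat \<Rightarrow> nat set \<Rightarrow> 'a::field)
     = (\<lambda>U. (\<Prod>v\<in>set (mon_vars k l). of_nat (fact (r (fst v) (snd v))))
              * block_monomial (occurrences k l r) U)"
proof -
  define occ where "occ v = {v} \<times> {..<r (fst v) (snd v)}" for v :: "nat \<times> nat"
  have occ_sub: "occ v \<subseteq> occurrences k l r" if "v \<in> set (mon_vars k l)" for v
    using that by (auto simp: occ_def occurrences_def)
  have "eval_mon k l r (block_substitution :: _ \<Rightarrow> _ \<Rightarrow> _ \<Rightarrow> 'a) = foldr (\<lambda>v. gmult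
      (\<lambda>U. of_nat (fact (r (fst v) (snd v))) * block_monomial (occ v) U)) (mon_vars k l) gone"
    unfolding eval_mon_def
  proof (intro foldr_cong refl)
    fix v :: "nat \<times> nat" and acc :: "nat set \<Rightarrow> 'a"
    assume v: "v \<in> set (mon_vars k l)"
    obtain i t where "v = (i, t)"
      by fastforce
    then show "(case v of (i, t) \<Rightarrow> \<lambda>acc. gmult (gpow (block_substitution i t) (r i t)) acc) acc
        = gmult (\<lambda>U. of_nat (fact (r (fst v) (snd v))) * block_monomial (occ v) U) acc"
      using gpow_sum_block_monomials_card[OF occ_sub[OF v], where 'a='a]
      by (simp add: block_substitution_def occ_def card_cartesian_product)
  qed
  also have "\<dots> = (\<lambda>U. (\<Prod>v\<in>set (mon_vars k l). of_nat (fact (r (fst v) (snd v))))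
      * block_monomial (\<Union>v\<in>set (mon_vars k l). occ v) U)"
    using occ_sub by (intro foldr_gmult_block_monomials distinct_mon_vars) (auto simp: occ_def)
  also have "(\<Union>v\<in>set (mon_vars k l). occ v) = occurrences k l r"
    by (auto simp: occ_def occurrences_def)
  finally show ?thesis .
qed

end

theorem mainTheorem7:
  fixes k :: nat and l :: "nat \<Rightarrow> nat" and r :: "nat \<Rightarrow> nat \<Rightarrow> nat" and p :: nat
  assumes "infinite (UNIV :: 'a::field set)"
    and "CHAR('a) = p" and "p > 2"
    and "k > 0"
    and "(\<Sum>i=1..k. i * (\<Sum>t=1..l i. r i t)) \<le> k"
    and "\<forall>i\<in>{1..k}. \<forall>t\<in>{1..l i}. r i t < p"
  shows "\<not> graded_identity_mon TYPE('a) k l r"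
proof
  assume identity: "graded_identity_mon TYPE('a) k l r"
  interpret monomial_layout k l r
    using assms(5) by unfold_locales
  have "\<forall>i\<in>{1..k}. \<forall>t\<in>{1..l i}. (block_substitution i t :: nat set \<Rightarrow> 'a) \<in> gcomp k (int i)"
    using block_substitution_in_gcomp by blast
  with identity have "eval_mon k l r (block_substitution :: nat \<Rightarrow> nat \<Rightarrow> nat set \<Rightarrow> 'a) = (\<lambda>_. 0)"
    unfolding graded_identity_mon_def by blast
  then have "eval_mon k l r block_substitution (\<Union>b\<in>occurrences k l r. padded_block b) = (0::'a)"
    by simp
  then have "(\<Prod>v\<in>set (mon_vars k l). of_nat (fact (r (fst v) (snd v))) :: 'a) = 0"
    by (simp add: eval_mon_block_substitution block_monomial_def gbasis_def)
  moreover have "(of_nat (fact (r (fst v) (snd v))) :: 'a) \<noteq> 0" if "v \<in> set (mon_vars k l)" for v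
    using that assms(2,6) by (intro of_nat_fact_nonzero) (auto simp: mon_vars_set)
  ultimately show False
    by auto
qed

end
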